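(* Let $X$ be a set and let $\mathcal{L}$ be a nest on $X$. A set $M\in\mathcal{L}$ is closed in the Alexandroff topology determined by $\triangleleft_{\mathcal{L}}$ if and only if $M=\bigcap\{L\in\mathcal{L} : M\subsetneq L\}$.
   Context: A nest on $X$ is a family of subsets of $X$ totally ordered by inclusion. Define $x\triangleleft_{\mathcal{L}} y$ iff there exists $L\in\mathcal{L}$ with $x\in L$ and $y\notin L$. For $A\subseteq X$ let ${\uparrow}A=\{x\in X : \exists y\in A,\ y\triangleleft_{\mathcal{L}} x\}$. The Alexandroff topology determined by $\triangleleft_{\mathcal{L}}$ consists of the sets $U\subseteq X$ with $U={\uparrow}U$; closed sets are their complements. *)

theory Defs
  imports Main
begin

definition nest :: "'a set \<Rightarrow> 'a set set \<Rightarrow> bool" where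
  "nest X \<L> \<longleftrightarrow> \<L> \<subseteq> Pow X \<and> (\<forall>A\<in>\<L>. \<forall>B\<in>\<L>. A \<subseteq> B \<or> B \<subseteq> A)"

definition nest_rel :: "'a set set \<Rightarrow> 'a \<Rightarrow> 'a \<Rightarrow> bool" where
  "nest_rel \<L> x y \<longleftrightarrow> (\<exists>L\<in>\<L>. x \<in> L \<and> y \<notin> L)"

definition up_set :: "'a set \<Rightarrow> 'a set set \<Rightarrow> 'a set \<Rightarrow> 'a set" where
  "up_set X \<L> A = {x\<in>X. \<exists>y\<in>A. nest_rel \<L> y x}"

definition alex_open :: "'a set \<Rightarrow> 'a set set \<Rightarrow> 'a set \<Rightarrow> bool" where
  "alex_open X \<L> U \<longleftrightarrow> U \<subseteq> X \<and> U = up_set X \<L> U"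

definition alex_closed :: "'a set \<Rightarrow> 'a set set \<Rightarrow> 'a set \<Rightarrow> bool" where
  "alex_closed X \<L> C \<longleftrightarrow> C \<subseteq> X \<and> alex_open X \<L> (X - C)"

end

theory Submission
  imports Defs
begin

text \<open>For a member M of a nest, a point y outside M lying in some L of the nest forces
  M \<subset> L by comparability. Hence the points above X - M are exactly those missing some
  strict successor of M, and closedness of M says these are all points of X - M.\<close>

lemma nest_memberD:
  assumes "nest X \<L>" and "L \<in> \<L>"
  shows "L \<subseteq> X"
  using assms unfolding nest_def by blast

lemma nest_comparable:
  assumes "nest X \<L>" and "L \<in> \<L>" and "M \<in> \<L>"
  shows "L \<subseteq> M \<or> M \<subseteq> L"
  using assms unfolding nest_def by blast

lemma up_set_Diff_nest_member:
  assumes "nest X \<L>" and "M \<in> \<L>"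
  shows "up_set X \<L> (X - M) = X - \<Inter>{L\<in>\<L>. M \<subset> L}"
proof
  show "up_set X \<L> (X - M) \<subseteq> X - \<Inter>{L\<in>\<L>. M \<subset> L}"
  proof
    fix x assume "x \<in> up_set X \<L> (X - M)"
    then obtain y L where "x \<in> X" "y \<in> X - M" "L \<in> \<L>" "y \<in> L" "x \<notin> L"
      unfolding up_set_def nest_rel_def by blast
    moreover from this have "M \<subset> L"
      using nest_comparable[OF assms(1) _ assms(2)] by blast
    ultimately show "x \<in> X - \<Inter>{L\<in>\<L>. M \<subset> L}" by blast
  qed
  show "X - \<Inter>{L\<in>\<L>. M \<subset> L} \<subseteq> up_set X \<L> (X - M)"
  proof
    fix x assume "x \<in> X - \<Inter>{L\<in>\<L>. M \<subset> L}"
    then obtain L where L: "x \<in> X" "L \<in> \<L>" "M \<subset> L" "x \<notin> L" by blast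
    then obtain y where "y \<in> L" "y \<notin> M" by blast
    with L nest_memberD[OF assms(1)] show "x \<in> up_set X \<L> (X - M)"
      unfolding up_set_def nest_rel_def by blast
  qed
qed

theorem proposition3p8:
  fixes X :: "'a set" and \<L> :: "'a set set" and M :: "'a set"
  assumes "nest X \<L>" and "M \<in> \<L>"
  shows "alex_closed X \<L> M \<longleftrightarrow> M = X \<inter> \<Inter>{L\<in>\<L>. M \<subset> L}"
proof -
  have "M \<subseteq> X" using nest_memberD[OF assms] .
  then have "alex_closed X \<L> M \<longleftrightarrow> X - M = X - \<Inter>{L\<in>\<L>. M \<subset> L}"
    unfolding alex_closed_def alex_open_def up_set_Diff_nest_member[OF assms] by blast
  also have "\<dots> \<longleftrightarrow> M = X \<inter> \<Inter>{L\<in>\<L>. M \<subset> L}"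
    using \<open>M \<subseteq> X\<close> by blast
  finally show ?thesis .
qed

end
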